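(* Let $n=2^m$, and let $\mathbf{G}_n^{\mathrm{ABS+}}$ be an ABS+ encoding matrix of size $n$, specified by the sets $\mathcal{I}_S^{(N)},\mathcal{I}_A^{(N)}$ for $N=2,4,\dots,n$. Then for any $u\in\{0,1\}^n$, the codeword $u\,\mathbf{G}_n^{\mathrm{ABS+}}$ can be computed (layer by layer, applying for $N=n,n/2,\dots,2$ the transforms of $\mathbf{Q}_N$ and then the $2\times 2$ polar transforms to the appropriate strided subvectors) using $O(n\log n)$ elementary bit operations.
   Context: $\mathbf{G}_2^{\mathrm{polar}}=\begin{bmatrix}1&0\\1&1\end{bmatrix}$, $\otimes$ is the Kronecker product, arithmetic over $\mathbb{F}_2$. For $1\le i\le N-1$, $\mathbf{S}_N^{(i)}$ (resp. $\mathbf{A}_N^{(i)}$) is the $N\times N$ binary matrix such that $u\mapsto u\mathbf{S}_N^{(i)}$ (resp. $u\mapsto u\mathbf{A}_N^{(i)}$) fixes all coordinates other than $u_i,u_{i+1}$ and maps $(u_i,u_{i+1})$ to $(u_{i+1},u_i)$ (resp. to $(u_i+u_{i+1},u_{i+1})$). ABS+ encoding matrices: $\mathbf{G}_2^{\mathrm{ABS+}}=\mathbf{Q}_2\mathbf{G}_2^{\mathrm{polar}}$ with $\mathbf{Q}_2=\mathbf{I}_2$, and for $N=4,8,\dots$, $\mathbf{G}_N^{\mathrm{ABS+}}=\mathbf{Q}_N(\mathbf{G}_{N/2}^{\mathrm{ABS+}}\otimes\mathbf{G}_2^{\mathrm{polar}})$ where $\mathbf{Q}_N=\big(\prod_{i\in\mathcal{I}_S^{(N)}}\mathbf{S}_N^{(i)}\big)\big(\prod_{i\in\mathcal{I}_A^{(N)}}\mathbf{A}_N^{(i)}\big)$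 for disjoint sets $\mathcal{I}_S^{(N)},\mathcal{I}_A^{(N)}\subseteq\{1,\dots,N-1\}$ of even integers whose union $\{i_1<\dots<i_t\}$ satisfies $i_{s+1}\ge i_s+4$. *)

theory Defs
  imports Main "HOL-Library.Z2"
begin

text \<open>Binary matrices over F2 (type bit), 0-based indices; an N x N matrix is a
function nat => nat => bit of which only entries with indices < N are used.
Row vectors are functions nat => bit (only coordinates < N are used).\<close>

type_synonym bmat = "nat \<Rightarrow> nat \<Rightarrow> bit"
type_synonym bvec = "nat \<Rightarrow> bit"

definition vecmat :: "nat \<Rightarrow> bvec \<Rightarrow> bmat \<Rightarrow> bvec" where
  "vecmat N u M = (\<lambda>j. \<Sum>i<N. u i * M i j)"

definition matmul :: "nat \<Rightarrow> bmat \<Rightarrow> bmat \<Rightarrow> bmat" where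
  "matmul N A B = (\<lambda>i k. \<Sum>j<N. A i j * B j k)"

definition idmat :: bmat where
  "idmat = (\<lambda>i j. if i = j then 1 else 0)"

definition polar2 :: bmat where
  "polar2 = (\<lambda>i j. if i < 2 \<and> j < 2 \<and> (i = 1 \<or> j = 0) then 1 else 0)"

text \<open>Kronecker product A \<otimes> G_2^polar for a square A: entry (2a+b, 2c+d) is A a c * polar2 b d.\<close>
definition kron2 :: "bmat \<Rightarrow> bmat" where
  "kron2 A = (\<lambda>p q. A (p div 2) (q div 2) * polar2 (p mod 2) (q mod 2))"

text \<open>S_N^(i), A_N^(i) for 1 \<le> i \<le> N-1, with the paper's 1-based coordinates
u_1..u_N: coordinate u_k is stored at 0-based index k-1, so u_i, u_{i+1} are at
indices i-1, i.  The map u \<mapsto> u S swaps them; u \<mapsto> u A sends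
(u_i, u_{i+1}) to (u_i + u_{i+1}, u_{i+1}).\<close>
definition Smat :: "nat \<Rightarrow> nat \<Rightarrow> bmat" where
  "Smat N i = (\<lambda>r c. if r < N \<and> c < N then
       (if r = i - 1 then (if c = i then 1 else 0)
        else if r = i then (if c = i - 1 then 1 else 0)
        else (if r = c then 1 else 0)) else 0)"

definition Amat :: "nat \<Rightarrow> nat \<Rightarrow> bmat" where
  "Amat N i = (\<lambda>r c. if r < N \<and> c < N then
       (if r = i \<and> c = i - 1 then 1 else if r = c then 1 else 0) else 0)"

text \<open>Product of a finite family of N x N matrices, taken in increasing order of the index.\<close>
definition matprod :: "nat \<Rightarrow> (nat \<Rightarrow> bmat) \<Rightarrow> nat set \<Rightarrow> bmat" where
  "matprod N F I = foldl (\<lambda>M i. matmul N M (F i)) idmat (sorted_list_of_set I)"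

definition Qmat :: "nat \<Rightarrow> nat set \<Rightarrow> nat set \<Rightarrow> bmat" where
  "Qmat N IS IA = matmul N (matprod N (Smat N) IS) (matprod N (Amat N) IA)"

definition valid_sets :: "nat \<Rightarrow> nat set \<Rightarrow> nat set \<Rightarrow> bool" where
  "valid_sets N IS IA \<longleftrightarrow>
     IS \<subseteq> {1..N-1} \<and> IA \<subseteq> {1..N-1} \<and> IS \<inter> IA = {} \<and>
     (\<forall>i \<in> IS \<union> IA. even i) \<and>
     (\<forall>a \<in> IS \<union> IA. \<forall>b \<in> IS \<union> IA. a < b \<longrightarrow> a + 4 \<le> b)"

text \<open>ABS+ encoding matrix of size 2^k, with the sets given as functions of N.
absG IS IA 0 is the 1x1 identity; absG IS IA 1 = Q_2 G_2^polar with Q_2 = I_2;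
absG IS IA (k+1) = Q_N (absG IS IA k \<otimes> G_2^polar) with N = 2^(k+1).\<close>
fun absG :: "(nat \<Rightarrow> nat set) \<Rightarrow> (nat \<Rightarrow> nat set) \<Rightarrow> nat \<Rightarrow> bmat" where
  "absG IS IA 0 = idmat"
| "absG IS IA (Suc k) =
     (if k = 0 then matmul 2 idmat (kron2 idmat)
      else matmul (2^Suc k) (Qmat (2^Suc k) (IS (2^Suc k)) (IA (2^Suc k)))
                  (kron2 (absG IS IA k)))"

text \<open>Cost model: straight-line programs of elementary in-place bit operations.
Xor i j: x_i := x_i + x_j; Swap i j: exchange x_i and x_j.\<close>
datatype bitop = Xor nat nat | Swap nat nat

fun exec_op :: "bitop \<Rightarrow> bvec \<Rightarrow> bvec" where
  "exec_op (Xor i j) x = x(i := x i + x j)"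
| "exec_op (Swap i j) x = x(i := x j, j := x i)"

definition exec :: "bitop list \<Rightarrow> bvec \<Rightarrow> bvec" where
  "exec prog x = foldl (\<lambda>y op. exec_op op y) x prog"

fun op_indices :: "bitop \<Rightarrow> nat set" where
  "op_indices (Xor i j) = {i, j}"
| "op_indices (Swap i j) = {i, j}"

end

theory Submission
  imports Defs
begin

text \<open>
  The recursion \<open>G\<^sub>2\<^sub>N = Q\<^sub>2\<^sub>N (G\<^sub>N \<otimes> G\<^sub>2)\<close> yields an in-place encoder.
  Multiplying by \<open>Q\<^sub>2\<^sub>N\<close> takes one swap or xor of two adjacent coordinates
  per element of \<open>I\<^sub>S \<union> I\<^sub>A\<close>, at most \<open>2N - 1\<close> operations.  Multiplying by
  \<open>G\<^sub>N \<otimes> G\<^sub>2\<close> takes one layer of \<open>N\<close> butterflies \<open>x(2a) := x(2a) + x(2a+1)\<close>,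
  after which the even and the odd coordinates are encoded separately by \<open>G\<^sub>N\<close>:
  the encoder of size \<open>N\<close> is run twice, with indices relabelled by \<open>a \<mapsto> 2a\<close> and
  \<open>a \<mapsto> 2a+1\<close>.  Hence \<open>T(2N) \<le> 3N + 2 T(N)\<close>, i.e. \<open>T(2\<^sup>m) \<le> 3 \<cdot> 2\<^sup>m \<cdot> m\<close>.
\<close>

lemma exec_Nil [simp]: "exec [] x = x"
  by (simp add: exec_def)

lemma exec_Cons [simp]: "exec (b # p) x = exec p (exec_op b x)"
  by (simp add: exec_def)

lemma exec_append [simp]: "exec (p @ q) x = exec q (exec p x)"
  by (simp add: exec_def)

definition computes :: "nat \<Rightarrow> bitop list \<Rightarrow> bmat \<Rightarrow> bool" where
  "computes N p M \<longleftrightarrow> (\<forall>u j. j < N \<longrightarrow> exec p u j = vecmat N u M j)"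

definition ops_within :: "nat \<Rightarrow> bitop list \<Rightarrow> bool" where
  "ops_within N p \<longleftrightarrow> (\<forall>b \<in> set p. op_indices b \<subseteq> {..<N})"

lemma ops_within_append [simp]: "ops_within N (p @ q) \<longleftrightarrow> ops_within N p \<and> ops_within N q"
  by (auto simp: ops_within_def)

subsection \<open>Matrix products as concatenated programs\<close>

lemma vecmat_cong: "(\<And>i. i < N \<Longrightarrow> u i = v i) \<Longrightarrow> vecmat N u M = vecmat N v M"
  unfolding vecmat_def by (auto intro!: ext sum.cong)

lemma vecmat_matmul: "vecmat N u (matmul N A B) = vecmat N (vecmat N u A) B"
proof
  fix j
  have "vecmat N u (matmul N A B) j = (\<Sum>i<N. \<Sum>l<N. u i * (A i l * B l j))"
    unfolding vecmat_def matmul_def by (simp only: sum_distrib_left)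
  also have "\<dots> = (\<Sum>l<N. \<Sum>i<N. u i * (A i l * B l j))"
    by (rule sum.swap)
  also have "\<dots> = vecmat N (vecmat N u A) B j"
    unfolding vecmat_def by (simp only: sum_distrib_right mult.assoc)
  finally show "vecmat N u (matmul N A B) j = vecmat N (vecmat N u A) B j" .
qed

lemma vecmat_idmat: "j < N \<Longrightarrow> vecmat N u idmat j = u j"
  by (simp add: vecmat_def idmat_def if_distrib cong: if_cong)

lemma computes_Nil: "computes N [] idmat"
  by (simp add: computes_def vecmat_idmat)

lemma computes_append:
  assumes "computes N p A" and "computes N q B"
  shows "computes N (p @ q) (matmul N A B)"
  unfolding computes_def
proof (intro allI impI)
  fix u j assume "j < N"
  then have "exec (p @ q) u j = vecmat N (exec p u) B j"
    using assms(2) by (simp add: computes_def)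
  also have "vecmat N (exec p u) B = vecmat N (vecmat N u A) B"
    using assms(1) by (intro vecmat_cong) (simp add: computes_def)
  finally show "exec (p @ q) u j = vecmat N u (matmul N A B) j"
    by (simp only: vecmat_matmul)
qed

lemma computes_foldl_matmul:
  assumes "computes N p M" and "\<forall>i \<in> set xs. computes N [g i] (F i)"
  shows "computes N (p @ map g xs) (foldl (\<lambda>M i. matmul N M (F i)) M xs)"
  using assms
proof (induction xs arbitrary: p M)
  case Nil
  then show ?case by simp
next
  case (Cons x xs)
  have "computes N (p @ [g x]) (matmul N M (F x))"
    using Cons.prems by (intro computes_append) auto
  then show ?case
    using Cons.IH[of "p @ [g x]"] Cons.prems(2) by simp
qed

lemma computes_matprod:
  assumes "\<forall>i \<in> I. computes N [g i] (F i)" and "finite I"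
  shows "computes N (map g (sorted_list_of_set I)) (matprod N F I)"
  using computes_foldl_matmul[OF computes_Nil, of "sorted_list_of_set I" N g F] assms
  by (simp add: matprod_def)

lemma computes_Swap_Smat:
  assumes "1 \<le> i" and "i < N"
  shows "computes N [Swap (i - 1) i] (Smat N i)"
  unfolding computes_def
proof (intro allI impI)
  fix u j assume j: "j < N"
  define r where "r = (if j = i then i - 1 else if j = i - 1 then i else j)"
  have "r < N" using assms j by (auto simp: r_def)
  have "vecmat N u (Smat N i) j = (\<Sum>k<N. if k = r then u k else 0)"
    unfolding vecmat_def using assms j by (intro sum.cong) (auto simp: Smat_def r_def)
  also have "\<dots> = u r"
    using \<open>r < N\<close> by simp
  finally show "exec [Swap (i - 1) i] u j = vecmat N u (Smat N i) j"
    using assms by (auto simp: r_def)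
qed

lemma computes_Xor_Amat:
  assumes "1 \<le> i" and "i < N"
  shows "computes N [Xor (i - 1) i] (Amat N i)"
  unfolding computes_def
proof (intro allI impI)
  fix u j assume j: "j < N"
  have "vecmat N u (Amat N i) j
      = (\<Sum>k<N. (if k = j then u k else 0) + (if k = i \<and> j = i - 1 then u k else 0))"
    unfolding vecmat_def using assms j by (intro sum.cong) (auto simp: Amat_def)
  also have "\<dots> = u j + (if j = i - 1 then u i else 0)"
    using assms j by (simp add: sum.distrib del: add_bit_eq_xor)
  finally show "exec [Xor (i - 1) i] u j = vecmat N u (Amat N i) j"
    using assms by auto
qed

definition Qmat_prog :: "nat set \<Rightarrow> nat set \<Rightarrow> bitop list" where
  "Qmat_prog IS IA = map (\<lambda>i. Swap (i - 1) i) (sorted_list_of_set IS)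
                 @ map (\<lambda>i. Xor (i - 1) i) (sorted_list_of_set IA)"

lemma computes_Qmat_prog:
  assumes "IS \<subseteq> {1..N-1}" and "IA \<subseteq> {1..N-1}"
  shows "computes N (Qmat_prog IS IA) (Qmat N IS IA)"
proof -
  have "finite IS" "finite IA"
    using assms by (auto intro: finite_subset)
  moreover have "1 \<le> i \<and> i < N" if "i \<in> IS \<union> IA" for i
    using assms that by fastforce
  ultimately show ?thesis
    unfolding Qmat_prog_def Qmat_def
    by (intro computes_append computes_matprod ballI computes_Swap_Smat computes_Xor_Amat) auto
qed

lemma ops_within_Qmat_prog:
  assumes "IS \<subseteq> {1..N-1}" and "IA \<subseteq> {1..N-1}"
  shows "ops_within N (Qmat_prog IS IA)"
  using assms finite_subset[OF assms(1)] finite_subset[OF assms(2)]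
  by (fastforce simp: ops_within_def Qmat_prog_def)

lemma length_Qmat_prog:
  assumes sub: "IS \<union> IA \<subseteq> {1..N-1}" and "IS \<inter> IA = {}"
  shows "length (Qmat_prog IS IA) \<le> N - 1"
proof -
  have "finite IS" "finite IA"
    using sub by (auto intro: finite_subset)
  then have "length (Qmat_prog IS IA) = card (IS \<union> IA)"
    using \<open>IS \<inter> IA = {}\<close> by (simp add: Qmat_prog_def card_Un_disjoint)
  also have "\<dots> \<le> card {1..N-1}"
    using sub by (intro card_mono) auto
  finally show ?thesis by simp
qed

lemma Qmat_prog_valid_sets:
  assumes "valid_sets N IS IA"
  shows "computes N (Qmat_prog IS IA) (Qmat N IS IA)"
    and "ops_within N (Qmat_prog IS IA)"
    and "length (Qmat_prog IS IA) \<le> N - 1"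
proof -
  have sub: "IS \<subseteq> {1..N-1}" "IA \<subseteq> {1..N-1}" and "IS \<inter> IA = {}"
    using assms unfolding valid_sets_def by blast+
  show "computes N (Qmat_prog IS IA) (Qmat N IS IA)"
    using sub by (rule computes_Qmat_prog)
  show "ops_within N (Qmat_prog IS IA)"
    using sub by (rule ops_within_Qmat_prog)
  show "length (Qmat_prog IS IA) \<le> N - 1"
    using sub \<open>IS \<inter> IA = {}\<close> by (intro length_Qmat_prog Un_least)
qed

subsection \<open>Running a program on a strided subvector\<close>

fun map_op :: "(nat \<Rightarrow> nat) \<Rightarrow> bitop \<Rightarrow> bitop" where
  "map_op f (Xor i j) = Xor (f i) (f j)"
| "map_op f (Swap i j) = Swap (f i) (f j)"

lemma op_indices_map_op: "op_indices (map_op f b) = f ` op_indices b"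
  by (cases b) auto

lemma exec_map_op_comp:
  assumes "inj f"
  shows "exec (map (map_op f) p) x \<circ> f = exec p (x \<circ> f)"
proof (induction p arbitrary: x)
  case Nil
  then show ?case by simp
next
  case (Cons b p)
  have "exec_op (map_op f b) x \<circ> f = exec_op b (x \<circ> f)"
    using assms by (cases b) (auto simp: inj_eq fun_eq_iff)
  then show ?case
    by (simp only: list.map exec_Cons Cons.IH)
qed

lemma exec_map_op_outside_range:
  assumes "k \<notin> range f"
  shows "exec (map (map_op f) p) x k = x k"
proof (induction p arbitrary: x)
  case Nil
  then show ?case by simp
next
  case (Cons b p)
  have "exec_op (map_op f b) x k = x k"
    using assms by (cases b) auto
  then show ?case
    using Cons.IH by simp
qed

lemma exec_even_odd_copies:
  assumes "b < 2"
  shows "exec (map (map_op (\<lambda>i. 2*i+1)) p @ map (map_op (\<lambda>i. 2*i)) p) w (2*a + b)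
       = exec p (\<lambda>i. w (2*i + b)) a"
proof -
  have inj_even: "inj (\<lambda>i::nat. 2*i)" and inj_odd: "inj (\<lambda>i::nat. 2*i+1)"
    by (auto intro: injI)
  let ?y = "exec (map (map_op (\<lambda>i. 2*i+1)) p) w"
  show ?thesis
  proof (cases "b = 0")
    case True
    have "2*i \<notin> range (\<lambda>i::nat. 2*i+1)" for i
      by (auto, presburger)
    then have "?y \<circ> (\<lambda>i. 2*i) = (\<lambda>i. w (2*i))"
      by (simp add: comp_def exec_map_op_outside_range)
    then show ?thesis
      using True fun_cong[OF exec_map_op_comp[OF inj_even, of p ?y], of a] by simp
  next
    case False
    then have "b = 1" using assms by simp
    have "2*a+1 \<notin> range (\<lambda>i::nat. 2*i)"
      by (auto, presburger)
    then show ?thesis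
      using \<open>b = 1\<close> fun_cong[OF exec_map_op_comp[OF inj_odd, of p w], of a]
      by (simp add: exec_map_op_outside_range comp_def)
  qed
qed

subsection \<open>Multiplication by a Kronecker product with the polar kernel\<close>

definition butterflies :: "nat \<Rightarrow> bitop list" where
  "butterflies M = map (\<lambda>a. Xor (2*a) (2*a+1)) [0..<M]"

lemma exec_butterflies:
  "exec (butterflies M) v k = (if k < 2*M \<and> even k then v k + v (k+1) else v k)"
proof (induction M arbitrary: k)
  case 0
  then show ?case by (simp add: butterflies_def)
next
  case (Suc M)
  have "butterflies (Suc M) = butterflies M @ [Xor (2*M) (2*M+1)]"
    by (simp add: butterflies_def)
  then show ?case
    using Suc.IH by auto
qed

lemma sum_lessThan_double: "(\<Sum>p<2*(M::nat). g p) = (\<Sum>a<M. g (2*a) + g (2*a+1))"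
  by (induction M) (simp_all add: add.assoc)

lemma vecmat_kron2:
  "vecmat (2*M) v (kron2 G) j
     = vecmat M (\<lambda>a. exec (butterflies M) v (2*a + j mod 2)) G (j div 2)"
proof -
  have "vecmat (2*M) v (kron2 G) j
      = (\<Sum>a<M. v (2*a) * kron2 G (2*a) j + v (2*a+1) * kron2 G (2*a+1) j)"
    unfolding vecmat_def by (rule sum_lessThan_double)
  also have "\<dots> = (\<Sum>a<M. exec (butterflies M) v (2*a + j mod 2) * G a (j div 2))"
  proof (intro sum.cong refl)
    fix a assume "a \<in> {..<M}"
    moreover have "j mod 2 = 0 \<or> j mod 2 = 1"
      by presburger
    ultimately show "v (2*a) * kron2 G (2*a) j + v (2*a+1) * kron2 G (2*a+1) j
        = exec (butterflies M) v (2*a + j mod 2) * G a (j div 2)"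
      by (auto simp: kron2_def polar2_def exec_butterflies distrib_right)
  qed
  finally show ?thesis
    unfolding vecmat_def .
qed

definition kron2_prog :: "nat \<Rightarrow> bitop list \<Rightarrow> bitop list" where
  "kron2_prog M p = butterflies M
     @ map (map_op (\<lambda>i. 2*i+1)) p @ map (map_op (\<lambda>i. 2*i)) p"

lemma computes_kron2_prog:
  assumes "computes M p G"
  shows "computes (2*M) (kron2_prog M p) (kron2 G)"
  unfolding computes_def
proof (intro allI impI)
  fix u j assume "j < 2*M"
  then have "j div 2 < M"
    by auto
  have "exec (kron2_prog M p) u j
      = exec p (\<lambda>a. exec (butterflies M) u (2*a + j mod 2)) (j div 2)"
    using exec_even_odd_copies[of "j mod 2" p "exec (butterflies M) u" "j div 2"]
    by (simp add: kron2_prog_def)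
  also have "\<dots> = vecmat (2*M) u (kron2 G) j"
    using assms \<open>j div 2 < M\<close> by (simp add: computes_def vecmat_kron2)
  finally show "exec (kron2_prog M p) u j = vecmat (2*M) u (kron2 G) j" .
qed

lemma ops_within_kron2_prog:
  assumes "ops_within M p"
  shows "ops_within (2*M) (kron2_prog M p)"
  using assms by (fastforce simp: ops_within_def kron2_prog_def butterflies_def op_indices_map_op)

lemma length_kron2_prog: "length (kron2_prog M p) = M + 2 * length p"
  by (simp add: kron2_prog_def butterflies_def)

fun abs_encoder :: "(nat \<Rightarrow> nat set) \<Rightarrow> (nat \<Rightarrow> nat set) \<Rightarrow> nat \<Rightarrow> bitop list" where
  "abs_encoder IS IA 0 = []"
| "abs_encoder IS IA (Suc k) =
     (if k = 0 then [] else Qmat_prog (IS (2^Suc k)) (IA (2^Suc k)))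
     @ kron2_prog (2^k) (abs_encoder IS IA k)"

definition valid_sets_up_to :: "(nat \<Rightarrow> nat set) \<Rightarrow> (nat \<Rightarrow> nat set) \<Rightarrow> nat \<Rightarrow> bool" where
  "valid_sets_up_to IS IA m \<longleftrightarrow> (\<forall>k. 2 \<le> k \<and> k \<le> m \<longrightarrow> valid_sets (2^k) (IS (2^k)) (IA (2^k)))"

lemma valid_sets_up_to_SucD:
  assumes "valid_sets_up_to IS IA (Suc k)"
  shows "valid_sets_up_to IS IA k" and "k \<noteq> 0 \<Longrightarrow> valid_sets (2 * 2^k) (IS (2 * 2^k)) (IA (2 * 2^k))"
  using assms unfolding valid_sets_up_to_def
  by (auto dest: spec[of _ "Suc k"])

lemma computes_abs_encoder:
  "valid_sets_up_to IS IA k \<Longrightarrow> computes (2^k) (abs_encoder IS IA k) (absG IS IA k)"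
proof (induction k)
  case 0
  then show ?case by (simp add: computes_Nil)
next
  case (Suc k)
  let ?N = "2 * 2^k :: nat"
  have "computes ?N (if k = 0 then [] else Qmat_prog (IS ?N) (IA ?N))
          (if k = 0 then idmat else Qmat ?N (IS ?N) (IA ?N))"
    using Qmat_prog_valid_sets(1)[OF valid_sets_up_to_SucD(2)[OF Suc.prems]]
    by (simp add: computes_Nil)
  moreover have "computes ?N (kron2_prog (2^k) (abs_encoder IS IA k)) (kron2 (absG IS IA k))"
    using computes_kron2_prog Suc.IH valid_sets_up_to_SucD(1)[OF Suc.prems] by simp
  ultimately show ?case
    by (cases "k = 0") (auto dest: computes_append)
qed

lemma ops_within_abs_encoder:
  "valid_sets_up_to IS IA k \<Longrightarrow> ops_within (2^k) (abs_encoder IS IA k)"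
proof (induction k)
  case 0
  then show ?case by (simp add: ops_within_def)
next
  case (Suc k)
  let ?N = "2 * 2^k :: nat"
  have "ops_within ?N (if k = 0 then [] else Qmat_prog (IS ?N) (IA ?N))"
    using Qmat_prog_valid_sets(2)[OF valid_sets_up_to_SucD(2)[OF Suc.prems]]
    by (simp add: ops_within_def)
  moreover have "ops_within ?N (kron2_prog (2^k) (abs_encoder IS IA k))"
    using ops_within_kron2_prog Suc.IH valid_sets_up_to_SucD(1)[OF Suc.prems] by simp
  ultimately show ?case
    by (cases "k = 0") auto
qed

lemma length_abs_encoder:
  "valid_sets_up_to IS IA k \<Longrightarrow> length (abs_encoder IS IA k) \<le> 3 * 2^k * k"
proof (induction k)
  case 0
  then show ?case by simp
next
  case (Suc k)
  let ?N = "2 * 2^k :: nat"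
  have "length (if k = 0 then [] else Qmat_prog (IS ?N) (IA ?N)) \<le> ?N - 1"
    using Qmat_prog_valid_sets(3)[OF valid_sets_up_to_SucD(2)[OF Suc.prems]]
    by simp
  moreover have "length (abs_encoder IS IA k) \<le> 3 * 2^k * k"
    using Suc.IH valid_sets_up_to_SucD(1)[OF Suc.prems] .
  ultimately show ?case
    by (cases "k = 0") (simp_all add: length_kron2_prog algebra_simps)
qed

theorem proposition1:
  "\<exists>C::nat. \<forall>m::nat. \<forall>IS IA :: nat \<Rightarrow> nat set.
     m \<ge> 1 \<longrightarrow>
     (\<forall>k. 2 \<le> k \<and> k \<le> m \<longrightarrow> valid_sets (2^k) (IS (2^k)) (IA (2^k))) \<longrightarrow>
     (\<exists>prog. length prog \<le> C * 2^m * m \<and>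
        (\<forall>op \<in> set prog. op_indices op \<subseteq> {..<2^m}) \<and>
        (\<forall>u j. j < 2^m \<longrightarrow> exec prog u j = vecmat (2^m) u (absG IS IA m) j))"
proof (intro exI[of _ 3] allI impI)
  fix m :: nat and IS IA :: "nat \<Rightarrow> nat set"
  assume "\<forall>k. 2 \<le> k \<and> k \<le> m \<longrightarrow> valid_sets (2^k) (IS (2^k)) (IA (2^k))"
  then have "valid_sets_up_to IS IA m"
    by (simp add: valid_sets_up_to_def)
  then show "\<exists>prog. length prog \<le> 3 * 2^m * m \<and>
      (\<forall>op \<in> set prog. op_indices op \<subseteq> {..<2^m}) \<and>
      (\<forall>u j. j < 2^m \<longrightarrow> exec prog u j = vecmat (2^m) u (absG IS IA m) j)"
    using length_abs_encoder ops_within_abs_encoder computes_abs_encoder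
    unfolding ops_within_def computes_def by blast
qed

end
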